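(* A set of pairwise disjoint convex polygons in $\mathbb{R}^2$ cannot always be reconstructed from a set of markers containing at least one marker per edge: there exist two distinct finite sets $S\neq S'$ of pairwise disjoint convex polygons and a finite set $\mathcal{M}$ of point-normal markers such that both $S$ and $S'$ are fully consistent with $\mathcal{M}$.
   Context: A point-normal marker in the plane is a pair $(p,n)$ with $p\in\mathbb{R}^2$ and $n$ a unit vector. A marker $(p,n)$ is on and aligned with an edge $e$ of a polygon $Q$ if $p\in e$ and $n$ is the outward unit normal of $Q$ along $e$. A set of polygons is consistent with a set of markers if every marker is on and aligned with an edge of one of the polygons; it is fully consistent if moreover every edge of every polygon in the set has at least one marker on and aligned with it. *)

theory Defs
  imports "HOL-Analysis.Analysis"
begin

type_synonym pt = "real ^ 2"

definition convex_polygon :: "pt set \<Rightarrow> bool" where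
  "convex_polygon Q \<longleftrightarrow> polytope Q \<and> aff_dim Q = 2"

definition is_edge :: "pt set \<Rightarrow> pt set \<Rightarrow> bool" where
  "is_edge e Q \<longleftrightarrow> e face_of Q \<and> aff_dim e = 1"

definition outward_normal :: "pt set \<Rightarrow> pt set \<Rightarrow> pt \<Rightarrow> bool" where
  "outward_normal Q e n \<longleftrightarrow> norm n = 1 \<and> (\<forall>y\<in>e. \<forall>x\<in>Q. n \<bullet> x \<le> n \<bullet> y)"

type_synonym marker = "pt \<times> pt"

definition is_marker :: "marker \<Rightarrow> bool" where
  "is_marker m \<longleftrightarrow> norm (snd m) = 1"

definition on_aligned :: "marker \<Rightarrow> pt set \<Rightarrow> pt set \<Rightarrow> bool" where
  "on_aligned m e Q \<longleftrightarrow> is_edge e Q \<and> fst m \<in> e \<and> outward_normal Q e (snd m)"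

definition consistent :: "pt set set \<Rightarrow> marker set \<Rightarrow> bool" where
  "consistent S M \<longleftrightarrow> (\<forall>m\<in>M. \<exists>Q\<in>S. \<exists>e. on_aligned m e Q)"

definition fully_consistent :: "pt set set \<Rightarrow> marker set \<Rightarrow> bool" where
  "fully_consistent S M \<longleftrightarrow> consistent S M \<and>
     (\<forall>Q\<in>S. \<forall>e. is_edge e Q \<longrightarrow> (\<exists>m\<in>M. on_aligned m e Q))"

definition disjoint_polygon_set :: "pt set set \<Rightarrow> bool" where
  "disjoint_polygon_set S \<longleftrightarrow> (\<forall>Q\<in>S. convex_polygon Q) \<and>
     (\<forall>Q\<in>S. \<forall>Q'\<in>S. Q \<noteq> Q' \<longrightarrow> Q \<inter> Q' = {})"

end

theory Submission
  imports Defs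
begin

(* Seed: the triangle T with vertices (-4,-4), (0,-2), (-3,-2), carrying one marker per
   edge (placed at a vertex, with the outward unit normal of that edge).  The "pinwheel"
   S consists of the four images of T under the quarter turns about the origin, and M
   consists of the correspondingly turned markers.  The reflection x -> -x maps M onto
   itself, but maps S to a different family S'. *)

(* Orthogonal maps are linear bijections, so they preserve faces and affine dimension,
   hence edges. *)
lemma orthogonal_image_is_edge:
  assumes f: "orthogonal_transformation f"
  shows "is_edge (f ` e) (f ` Q) \<longleftrightarrow> is_edge e Q"
  using orthogonal_transformation_linear[OF f] orthogonal_transformation_inj[OF f]
  by (simp add: is_edge_def face_of_linear_image)

lemma orthogonal_image_outward_normal:
  assumes f: "orthogonal_transformation f"
  shows "outward_normal (f ` Q) (f ` e) (f n) \<longleftrightarrow> outward_normal Q e n"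
  using f
  by (simp add: outward_normal_def orthogonal_transformation_def orthogonal_transformation_norm)

lemma orthogonal_image_on_aligned:
  assumes f: "orthogonal_transformation f"
  shows "on_aligned (map_prod f f m) (f ` e) (f ` Q) \<longleftrightarrow> on_aligned m e Q"
  using orthogonal_transformation_inj[OF f]
  by (cases m) (simp add: on_aligned_def orthogonal_image_is_edge[OF f]
      orthogonal_image_outward_normal[OF f] inj_image_mem_iff)

lemma orthogonal_image_edge_cases:
  assumes f: "orthogonal_transformation f" and "is_edge e' (f ` Q)"
  obtains e where "e' = f ` e" "is_edge e Q"
proof -
  have "e' = f ` (inv f ` e')"
    using orthogonal_transformation_surj[OF f] by (simp add: image_f_inv_f)
  with assms show ?thesis using orthogonal_image_is_edge[OF f] that by metis
qed

lemma fully_consistent_orthogonal_image: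
  assumes f: "orthogonal_transformation f" and fc: "fully_consistent S M"
  shows "fully_consistent (image f ` S) (map_prod f f ` M)"
  unfolding fully_consistent_def consistent_def
proof (intro conjI ballI allI impI)
  fix m' assume "m' \<in> map_prod f f ` M"
  then obtain m where m: "m \<in> M" "m' = map_prod f f m" by auto
  then obtain Q e where "Q \<in> S" "on_aligned m e Q"
    using fc unfolding fully_consistent_def consistent_def by blast
  then have "f ` Q \<in> image f ` S" "on_aligned m' (f ` e) (f ` Q)"
    using m(2) orthogonal_image_on_aligned[OF f] by auto
  then show "\<exists>Q'\<in>image f ` S. \<exists>e'. on_aligned m' e' Q'" by blast
next
  fix Q' e' assume "Q' \<in> image f ` S" "is_edge e' Q'"
  then obtain Q where Q: "Q \<in> S" "Q' = f ` Q" by auto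
  with \<open>is_edge e' Q'\<close> obtain e where e: "e' = f ` e" "is_edge e Q"
    using orthogonal_image_edge_cases[OF f] by metis
  then obtain m where "m \<in> M" "on_aligned m e Q"
    using fc Q(1) unfolding fully_consistent_def by blast
  then have "map_prod f f m \<in> map_prod f f ` M" "on_aligned (map_prod f f m) e' Q'"
    using Q(2) e(1) orthogonal_image_on_aligned[OF f] by auto
  then show "\<exists>m'\<in>map_prod f f ` M. on_aligned m' e' Q'" by (rule bexI[rotated])
qed

lemma convex_polygon_orthogonal_image:
  assumes f: "orthogonal_transformation f" and "convex_polygon Q"
  shows "convex_polygon (f ` Q)"
  using assms orthogonal_transformation_linear[OF f] orthogonal_transformation_inj[OF f]
  by (simp add: convex_polygon_def polytope_linear_image)

lemma disjoint_polygon_set_orthogonal_image: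
  assumes f: "orthogonal_transformation f" and S: "disjoint_polygon_set S"
  shows "disjoint_polygon_set (image f ` S)"
  unfolding disjoint_polygon_set_def
proof (intro conjI ballI impI)
  fix Q' assume "Q' \<in> image f ` S"
  then show "convex_polygon Q'"
    using S convex_polygon_orthogonal_image[OF f] unfolding disjoint_polygon_set_def by blast
next
  fix Q1 Q2 assume "Q1 \<in> image f ` S" "Q2 \<in> image f ` S" "Q1 \<noteq> Q2"
  then obtain P1 P2 where "P1 \<in> S" "P2 \<in> S" "P1 \<noteq> P2" "Q1 = f ` P1" "Q2 = f ` P2" by auto
  then show "Q1 \<inter> Q2 = {}"
    using S orthogonal_transformation_inj[OF f] unfolding disjoint_polygon_set_def
    by (simp add: image_Int[symmetric])
qed

lemma fully_consistent_Un:
  "fully_consistent S M \<Longrightarrow> fully_consistent S' M' \<Longrightarrow> fully_consistent (S \<union> S') (M \<union> M')"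
  unfolding fully_consistent_def consistent_def by blast

lemma outward_normal_supporting_line:
  fixes w :: pt
  assumes "w \<noteq> 0" "\<forall>x\<in>P. w \<bullet> x \<le> k" "w \<bullet> a = k" "w \<bullet> b = k"
  shows "outward_normal (convex hull P) (closed_segment a b) (w /\<^sub>R norm w)"
proof -
  have "convex hull P \<subseteq> {x. w \<bullet> x \<le> k}"
    using assms(2) by (intro hull_minimal) (auto simp: convex_halfspace_le)
  moreover have "closed_segment a b \<subseteq> {x. w \<bullet> x = k}"
    using assms(3,4) by (intro closed_segment_subset) (auto simp: convex_hyperplane)
  ultimately have "w \<bullet> x \<le> w \<bullet> y" if "y \<in> closed_segment a b" "x \<in> convex hull P" for x y
    using that by auto
  then show ?thesis
    using assms(1) by (auto simp: outward_normal_def divide_right_mono)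
qed

lemma not_collinear_by_normal:
  fixes a b c w :: pt
  assumes "a \<noteq> b" "w \<bullet> a = w \<bullet> b" "w \<bullet> c < w \<bullet> a"
  shows "\<not> collinear {a, b, c}"
proof
  assume "collinear {a, b, c}"
  then obtain u where "\<forall>x\<in>{a,b,c}. \<forall>y\<in>{a,b,c}. \<exists>t. x - y = t *\<^sub>R u"
    unfolding collinear_def by blast
  then obtain s t where st: "a - b = s *\<^sub>R u" "c - a = t *\<^sub>R u" by blast
  have "s \<noteq> 0" using st assms(1) by auto
  have "s * (w \<bullet> u) = 0"
    using st(1) assms(2) by (metis inner_diff_right inner_scaleR_right right_minus_eq)
  then have "w \<bullet> (c - a) = 0" using st(2) \<open>s \<noteq> 0\<close> by simp
  then show False using assms(3) by (simp add: inner_diff_right)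
qed

lemma aff_dim_hull_independent:
  fixes P :: "pt set"
  assumes "\<not> affine_dependent P"
  shows "aff_dim (convex hull P) = int (card P) - 1"
  using aff_dim_affine_independent[OF assms] by (simp add: aff_dim_convex_hull)

(* The edges of a non-degenerate triangle are exactly its three sides: faces of a simplex
   are hulls of vertex subsets, and the one-dimensional ones come from pairs. *)
lemma triangle_edges:
  fixes a b c :: pt
  assumes "\<not> collinear {a, b, c}"
  shows "is_edge e (convex hull {a, b, c}) \<longleftrightarrow>
     e = closed_segment a b \<or> e = closed_segment b c \<or> e = closed_segment a c"
proof -
  have ind: "\<not> affine_dependent {a, b, c}" and d: "a \<noteq> b" "a \<noteq> c" "b \<noteq> c"
    using assms collinear_3_eq_affine_dependent by blast+
  have "is_edge e (convex hull {a, b, c}) \<longleftrightarrow>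
        (\<exists>V. V \<subseteq> {a, b, c} \<and> card V = 2 \<and> e = convex hull V)"
  proof -
    have "aff_dim (convex hull V) = 1 \<longleftrightarrow> card V = 2" if "V \<subseteq> {a, b, c}" for V
      using aff_dim_hull_independent[OF affine_independent_subset[OF ind that]] by simp
    then show ?thesis
      unfolding is_edge_def face_of_convex_hull_affine_independent[OF ind] by blast
  qed
  also have "\<dots> \<longleftrightarrow> (\<exists>V\<in>{{a, b}, {b, c}, {a, c}}. e = convex hull V)"
  proof
    assume "\<exists>V. V \<subseteq> {a, b, c} \<and> card V = 2 \<and> e = convex hull V"
    then obtain x y where "{x, y} \<subseteq> {a, b, c}" "x \<noteq> y" "e = convex hull {x, y}"
      by (metis card_2_iff)
    then show "\<exists>V\<in>{{a, b}, {b, c}, {a, c}}. e = convex hull V"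
      by (auto simp: insert_commute)
  next
    assume "\<exists>V\<in>{{a, b}, {b, c}, {a, c}}. e = convex hull V"
    then obtain V where V: "V \<in> {{a, b}, {b, c}, {a, c}}" "e = convex hull V" by blast
    then have "V \<subseteq> {a, b, c}" "card V = 2" using d by auto
    with V(2) show "\<exists>V. V \<subseteq> {a, b, c} \<and> card V = 2 \<and> e = convex hull V" by blast
  qed
  finally show ?thesis by (simp add: segment_convex_hull)
qed

lemma triangle_convex_polygon:
  fixes a b c :: pt
  assumes "\<not> collinear {a, b, c}"
  shows "convex_polygon (convex hull {a, b, c})"
proof -
  have "\<not> affine_dependent {a, b, c}" "a \<noteq> b" "a \<noteq> c" "b \<noteq> c"
    using assms collinear_3_eq_affine_dependent by blast+
  then show ?thesis
    by (simp add: convex_polygon_def polytope_convex_hull aff_dim_hull_independent)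
qed

lemma triangle_fully_consistent:
  fixes a b c :: pt
  defines "T \<equiv> convex hull {a, b, c}"
  assumes "\<not> collinear {a, b, c}"
    and "p \<in> closed_segment a b" "outward_normal T (closed_segment a b) u"
    and "q \<in> closed_segment b c" "outward_normal T (closed_segment b c) v"
    and "r \<in> closed_segment a c" "outward_normal T (closed_segment a c) w"
  shows "fully_consistent {T} {(p, u), (q, v), (r, w)}"
proof -
  have edges: "is_edge e T \<longleftrightarrow>
      e = closed_segment a b \<or> e = closed_segment b c \<or> e = closed_segment a c" for e
    unfolding T_def using triangle_edges[OF assms(2)] .
  have ab: "on_aligned (p, u) (closed_segment a b) T"
    and bc: "on_aligned (q, v) (closed_segment b c) T"
    and ac: "on_aligned (r, w) (closed_segment a c) T"
    using assms(3-8) edges by (simp_all add: on_aligned_def)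
  have "consistent {T} {(p, u), (q, v), (r, w)}"
    unfolding consistent_def using ab bc ac by auto
  moreover have "\<exists>m\<in>{(p, u), (q, v), (r, w)}. on_aligned m e T" if "is_edge e T" for e
    using that ab bc ac unfolding edges by auto
  ultimately show ?thesis
    unfolding fully_consistent_def by simp
qed

definition marker_at :: "pt \<Rightarrow> pt \<Rightarrow> marker" where
  "marker_at p w = (p, w /\<^sub>R norm w)"

lemma is_marker_marker_at: "w \<noteq> 0 \<Longrightarrow> is_marker (marker_at p w)"
  by (simp add: is_marker_def marker_at_def)

lemma marker_at_orthogonal_image:
  "orthogonal_transformation f \<Longrightarrow> map_prod f f (marker_at p w) = marker_at (f p) (f w)"
  by (simp add: marker_at_def orthogonal_transformation_norm orthogonal_transformation_scaleR)

definition turn :: "pt \<Rightarrow> pt" where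
  "turn x = vector [- x $ 2, x $ 1]"

definition mirror :: "pt \<Rightarrow> pt" where
  "mirror x = vector [- x $ 1, x $ 2]"

lemma turn_vector [simp]: "turn (vector [a, b]) = vector [- b, a]"
  by (simp add: turn_def)

lemma mirror_vector [simp]: "mirror (vector [a, b]) = vector [- a, b]"
  by (simp add: mirror_def)

lemma orthogonal_transformation_turn: "orthogonal_transformation turn"
proof -
  have "linear turn"
    by (rule linearI) (simp_all add: turn_def vec_eq_iff forall_2)
  moreover have "turn v \<bullet> turn w = v \<bullet> w" for v w
    by (simp add: turn_def inner_vec_def sum_2 algebra_simps)
  ultimately show ?thesis by (simp add: orthogonal_transformation_def)
qed

lemma orthogonal_transformation_mirror: "orthogonal_transformation mirror"
proof -
  have "linear mirror"
    by (rule linearI) (simp_all add: mirror_def vec_eq_iff forall_2)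
  moreover have "mirror v \<bullet> mirror w = v \<bullet> w" for v w
    by (simp add: mirror_def inner_vec_def sum_2 algebra_simps)
  ultimately show ?thesis by (simp add: orthogonal_transformation_def)
qed

definition orbit_upto :: "('a \<Rightarrow> 'a) \<Rightarrow> nat \<Rightarrow> 'a set \<Rightarrow> 'a set" where
  "orbit_upto f n A = (\<Union>k<n. (f ^^ k) ` A)"

lemma orbit_upto_Suc: "orbit_upto f (Suc n) A = orbit_upto f n A \<union> (f ^^ n) ` A"
  by (auto simp: orbit_upto_def lessThan_Suc)

lemma fully_consistent_orbit:
  assumes f: "orthogonal_transformation f" and fc: "fully_consistent S M"
  shows "fully_consistent (orbit_upto (image f) n S) (orbit_upto (map_prod f f) n M)"
proof (induction n)
  case 0
  then show ?case by (simp add: orbit_upto_def fully_consistent_def consistent_def)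
next
  case (Suc n)
  have "fully_consistent ((image f ^^ k) ` S) ((map_prod f f ^^ k) ` M)" for k
  proof (induction k)
    case (Suc k)
    then show ?case
      using fully_consistent_orthogonal_image[OF f Suc.IH] by (simp add: image_image)
  qed (simp add: fc)
  with Suc.IH show ?case
    by (simp add: orbit_upto_Suc fully_consistent_Un)
qed

lemma orbit_upto_4: "orbit_upto f 4 A = A \<union> f ` A \<union> f ` f ` A \<union> f ` f ` f ` A"
  by (simp add: orbit_upto_def numeral_eq_Suc lessThan_Suc image_comp Un_ac)

lemma inner_vector_2 [simp]: "(vector [a, b] :: pt) \<bullet> vector [c, d] = a * c + b * d"
  by (simp add: inner_vec_def sum_2)

lemma vector_2_eq_iff [simp]: "((vector [a, b] :: pt) = vector [c, d]) \<longleftrightarrow> a = c \<and> b = d"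
  by (simp add: vec_eq_iff forall_2)

lemma vector_2_eq_0_iff [simp]: "((vector [a, b] :: pt) = 0) \<longleftrightarrow> a = 0 \<and> b = 0"
  by (simp add: vec_eq_iff forall_2)

lemma convex_hulls_disjoint:
  fixes s :: pt
  assumes "\<forall>v\<in>A. s \<bullet> v \<le> k" "\<forall>v\<in>B. k' \<le> s \<bullet> v" "k < k'"
  shows "convex hull A \<inter> convex hull B = {}"
proof -
  have "convex hull A \<subseteq> {x. s \<bullet> x \<le> k}"
    using assms(1) by (intro hull_minimal) (auto simp: convex_halfspace_le)
  moreover have "convex hull B \<subseteq> {x. k' \<le> s \<bullet> x}"
    using assms(2) by (intro hull_minimal) (auto simp: convex_halfspace_ge)
  ultimately show ?thesis using assms(3) by fastforce
qed

lemma turn_image_hull [simp]: "turn ` (convex hull P) = convex hull (turn ` P)"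
  by (simp add: convex_hull_linear_image orthogonal_transformation_linear[OF orthogonal_transformation_turn])

lemma mirror_image_hull [simp]: "mirror ` (convex hull P) = convex hull (mirror ` P)"
  by (simp add: convex_hull_linear_image orthogonal_transformation_linear[OF orthogonal_transformation_mirror])

definition seed_triangle :: "pt set" where
  "seed_triangle = convex hull {vector [-4, -4], vector [0, -2], vector [-3, -2]}"

definition seed_markers :: "marker set" where
  "seed_markers = {marker_at (vector [-4, -4]) (vector [1, -2]),
     marker_at (vector [0, -2]) (vector [0, 1]), marker_at (vector [-4, -4]) (vector [-2, 1])}"

lemma seed_not_collinear: "\<not> collinear {vector [-4, -4], vector [0, -2], vector [-3, -2] :: pt}"
  by (rule not_collinear_by_normal[where w = "vector [1, -2]"]) simp_all

(* Each seed marker lies on its side, and the line through that side supports the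
   triangle on the side opposite to the normal. *)
lemma seed_fully_consistent: "fully_consistent {seed_triangle} seed_markers"
  unfolding seed_triangle_def seed_markers_def marker_at_def
  by (rule triangle_fully_consistent[OF seed_not_collinear];
      (rule outward_normal_supporting_line)?) simp_all

definition pinwheel :: "pt set set" where
  "pinwheel = orbit_upto (image turn) 4 {seed_triangle}"

definition pinwheel_markers :: "marker set" where
  "pinwheel_markers = orbit_upto (map_prod turn turn) 4 seed_markers"

lemma pinwheel_fully_consistent: "fully_consistent pinwheel pinwheel_markers"
  unfolding pinwheel_def pinwheel_markers_def
  by (rule fully_consistent_orbit[OF orthogonal_transformation_turn seed_fully_consistent])

lemma pinwheel_polygons: "Q \<in> pinwheel \<Longrightarrow> convex_polygon Q"
  using triangle_convex_polygon[OF seed_not_collinear]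
    convex_polygon_orthogonal_image[OF orthogonal_transformation_turn]
  by (auto simp del: turn_image_hull simp: pinwheel_def orbit_upto_4 seed_triangle_def)

lemma pinwheel_explicit: "pinwheel =
   {convex hull {vector [-4, -4], vector [0, -2], vector [-3, -2]},
    convex hull {vector [4, -4], vector [2, 0], vector [2, -3]},
    convex hull {vector [4, 4], vector [0, 2], vector [3, 2]},
    convex hull {vector [-4, 4], vector [-2, 0], vector [-2, 3]}}"
  by (simp add: pinwheel_def orbit_upto_4 seed_triangle_def insert_commute)

(* Any two triangles of the pinwheel are separated by a coordinate line. *)
lemma pinwheel_disjoint: "disjoint_polygon_set pinwheel"
proof -
  let ?hull = "\<lambda>a b c. convex hull {vector a, vector b, vector c} :: pt set"
  have "?hull [-4, -4] [0, -2] [-3, -2] \<inter> ?hull [4, -4] [2, 0] [2, -3] = {}"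
    by (rule convex_hulls_disjoint[where s = "vector [1, 0]" and k = 0 and k' = 2]) simp_all
  moreover have "?hull [-4, -4] [0, -2] [-3, -2] \<inter> ?hull [4, 4] [0, 2] [3, 2] = {}"
    by (rule convex_hulls_disjoint[where s = "vector [0, 1]" and k = "-2" and k' = 2]) simp_all
  moreover have "?hull [-4, -4] [0, -2] [-3, -2] \<inter> ?hull [-4, 4] [-2, 0] [-2, 3] = {}"
    by (rule convex_hulls_disjoint[where s = "vector [0, 1]" and k = "-2" and k' = 0]) simp_all
  moreover have "?hull [4, -4] [2, 0] [2, -3] \<inter> ?hull [4, 4] [0, 2] [3, 2] = {}"
    by (rule convex_hulls_disjoint[where s = "vector [0, 1]" and k = 0 and k' = 2]) simp_all
  moreover have "?hull [4, -4] [2, 0] [2, -3] \<inter> ?hull [-4, 4] [-2, 0] [-2, 3] = {}"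
    by (rule convex_hulls_disjoint[where s = "vector [-1, 0]" and k = "-2" and k' = 2]) simp_all
  moreover have "?hull [4, 4] [0, 2] [3, 2] \<inter> ?hull [-4, 4] [-2, 0] [-2, 3] = {}"
    by (rule convex_hulls_disjoint[where s = "vector [-1, 0]" and k = 0 and k' = 2]) simp_all
  ultimately show ?thesis
    using pinwheel_polygons unfolding disjoint_polygon_set_def pinwheel_explicit
    by (auto simp: Int_commute)
qed

lemma mirror_mirror [simp]: "mirror (mirror x) = x"
  by (simp add: mirror_def vec_eq_iff forall_2)

(* The marker set is symmetric under the reflection: the reflected markers are among the
   twelve pinwheel markers, and the reflection is an involution. *)
lemma pinwheel_markers_mirror_invariant:
  "map_prod mirror mirror ` pinwheel_markers = pinwheel_markers"
proof -
  let ?g = "map_prod mirror mirror"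
  have sub: "?g ` pinwheel_markers \<subseteq> pinwheel_markers"
    by (simp add: pinwheel_markers_def orbit_upto_4 seed_markers_def
        marker_at_orthogonal_image[OF orthogonal_transformation_turn]
        marker_at_orthogonal_image[OF orthogonal_transformation_mirror])
  have "?g (?g m) = m" for m
    by (cases m) simp
  then have "?g ` ?g ` pinwheel_markers = pinwheel_markers"
    by (simp add: image_image)
  then have "pinwheel_markers \<subseteq> ?g ` pinwheel_markers"
    using image_mono[OF sub, of ?g] by simp
  with sub show ?thesis by (rule subset_antisym)
qed

(* The reflected pinwheel is a different family: the reflected seed meets the seed at
   (0,-2), so by disjointness it would have to be the seed itself, yet it contains the
   vertex (4,-4) which lies to the right of the seed. *)
lemma mirrored_pinwheel_differs: "image mirror ` pinwheel \<noteq> pinwheel"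
proof
  assume eq: "image mirror ` pinwheel = pinwheel"
  have seed: "seed_triangle \<in> pinwheel"
    by (simp add: pinwheel_def orbit_upto_4)
  then have mirrored: "mirror ` seed_triangle \<in> pinwheel"
    using eq by blast
  have "vector [0, -2] \<in> seed_triangle \<inter> mirror ` seed_triangle"
    by (simp add: seed_triangle_def hull_inc)
  then have "mirror ` seed_triangle = seed_triangle"
    using pinwheel_disjoint seed mirrored unfolding disjoint_polygon_set_def
    by (metis empty_iff)
  moreover have "vector [4, -4] \<in> mirror ` seed_triangle"
    by (simp add: seed_triangle_def hull_inc)
  moreover have "seed_triangle \<inter> convex hull {vector [4, -4]} = {}"
    unfolding seed_triangle_def
    by (rule convex_hulls_disjoint[where s = "vector [1, 0]" and k = 0 and k' = 4]) simp_all
  ultimately show False by simp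
qed

theorem mainTheorem15:
  shows "\<exists>S S' M. finite S \<and> finite S' \<and> S \<noteq> S' \<and> finite M \<and>
    (\<forall>m\<in>M. is_marker m) \<and>
    disjoint_polygon_set S \<and> disjoint_polygon_set S' \<and>
    fully_consistent S M \<and> fully_consistent S' M"
proof (rule exI[of _ pinwheel], rule exI[of _ "image mirror ` pinwheel"],
    rule exI[of _ pinwheel_markers], intro conjI)
  show "finite pinwheel" "finite (image mirror ` pinwheel)"
    by (simp_all add: pinwheel_explicit)
  show "finite pinwheel_markers"
    by (simp add: pinwheel_markers_def orbit_upto_4 seed_markers_def)
  show "\<forall>m\<in>pinwheel_markers. is_marker m"
    by (simp add: pinwheel_markers_def orbit_upto_4 seed_markers_def is_marker_marker_at
        marker_at_orthogonal_image[OF orthogonal_transformation_turn])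
  show "pinwheel \<noteq> image mirror ` pinwheel"
    using mirrored_pinwheel_differs by (rule not_sym)
  show "disjoint_polygon_set pinwheel" "disjoint_polygon_set (image mirror ` pinwheel)"
    using pinwheel_disjoint disjoint_polygon_set_orthogonal_image[OF orthogonal_transformation_mirror]
    by simp_all
  show "fully_consistent pinwheel pinwheel_markers"
    by (rule pinwheel_fully_consistent)
  show "fully_consistent (image mirror ` pinwheel) pinwheel_markers"
    using fully_consistent_orthogonal_image[OF orthogonal_transformation_mirror pinwheel_fully_consistent]
    by (simp add: pinwheel_markers_mirror_invariant)
qed

end
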